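(* Let $n\ge 2$ and $1\le k\le n-1$ be integers, $T>0$, and $t\in\{1,\dots,n\}$. Let $X_1,\dots,X_n$ be independent random variables each uniformly distributed on $[0,T]$, and let $$Y_{t,2}=\min\Big(X_t,\ \max\big(\mathrm{mink}(\{X_i\}_{i\neq t})\big)\Big),$$ where $\max(\mathrm{mink}(\{X_i\}_{i\neq t}))$ denotes the $k$-th smallest of the $n-1$ values $X_i$, $i\ne t$. Then $$E[Y_{t,2}]=\frac{T}{2}-\frac{(n-k)(n-k+1)T}{2n(n+1)}.$$
   Context: In an $(n,k,m)$ systematic MDS array code stored on $n$ nodes (any $k$ nodes recover all data), $X_i$ is the access latency of node $i$; $Y_{t,2}$ is the data access latency of the proposed accelerated access algorithms (AAKL/AAUL) for the data of node $t$: the minimum of directly reading node $t$ and reading the fastest $k$ nodes other than $t$ and decoding. *)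

theory Defs
  imports "HOL-Probability.Probability"
begin

definition kth_smallest_except :: "nat \<Rightarrow> nat \<Rightarrow> nat \<Rightarrow> (nat \<Rightarrow> real) \<Rightarrow> real" where
  "kth_smallest_except n k t x = sort (map x (filter (\<lambda>i. i \<noteq> t) [1..<Suc n])) ! (k - 1)"

definition Y2 :: "nat \<Rightarrow> nat \<Rightarrow> nat \<Rightarrow> (nat \<Rightarrow> real) \<Rightarrow> real" where
  "Y2 n k t x = min (x t) (kth_smallest_except n k t x)"

end

theory Submission
  imports Defs
begin

(* The expectation of the nonnegative variable Y = Y_{t,2} is the integral of its tail
   P(Y > s) over s >= 0. Since Y is the minimum of X_t and the k-th smallest of the other
   n - 1 variables, Y > s holds iff X_t > s and fewer than k of the others are <= s.
   Splitting this event according to which coordinates lie below s, independence gives,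
   with q = s / T, the tail (1 - q) * sum_{j<k} C(n-1, j) q^j (1 - q)^(n-1-j).
   Each summand integrates over q in [0, 1] to a Beta integral,
   C(n-1, j) j! (n-j)! / (n+1)! = (n - j) / (n (n + 1)), and summing over j < k
   gives the closed form. *)

lemma sorted_nth_greater_iff:
  fixes ys :: "'a::linorder list"
  assumes "sorted ys" and "k < length ys"
  shows "s < ys ! k \<longleftrightarrow> length (filter (\<lambda>y. y \<le> s) ys) \<le> k"
proof -
  define S where "S = {i. i < length ys \<and> ys ! i \<le> s}"
  have length_filter: "length (filter (\<lambda>y. y \<le> s) ys) = card S"
    unfolding S_def by (rule length_filter_conv_card)
  have "finite S"
    by (simp add: S_def)
  show ?thesis
  proof
    assume "s < ys ! k"
    have "i < k" if "i \<in> S" for i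
    proof (rule ccontr)
      assume "\<not> i < k"
      then have "ys ! k \<le> ys ! i"
        using assms that by (intro sorted_nth_mono) (auto simp: S_def)
      moreover have "ys ! i \<le> s"
        using that by (simp add: S_def)
      ultimately show False
        using \<open>s < ys ! k\<close> by (meson not_le order_trans)
    qed
    then have "card S \<le> card {..<k}"
      by (intro card_mono) auto
    then show "length (filter (\<lambda>y. y \<le> s) ys) \<le> k"
      by (simp add: length_filter)
  next
    assume count: "length (filter (\<lambda>y. y \<le> s) ys) \<le> k"
    show "s < ys ! k"
    proof (rule ccontr)
      assume "\<not> s < ys ! k"
      then have "{..k} \<subseteq> S"
        using assms sorted_nth_mono[of ys _ k] by (force simp: S_def)
      then have "card {..k} \<le> card S"
        using \<open>finite S\<close> by (rule card_mono[rotated])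
      then show False
        using count by (simp add: length_filter)
    qed
  qed
qed

lemma length_filter_neq_upt:
  assumes "t \<in> {1..n}"
  shows "length (filter (\<lambda>i. i \<noteq> t) [1..<Suc n]) = n - 1"
proof -
  have "distinct (filter (\<lambda>i. i \<noteq> t) [1..<Suc n])" and "set (filter (\<lambda>i. i \<noteq> t) [1..<Suc n]) = {1..n} - {t}"
    by auto
  then show ?thesis
    using assms by (metis distinct_card card_Diff_singleton card_atLeastAtMost diff_Suc_1 finite_atLeastAtMost)
qed

lemma kth_smallest_except_greater_iff:
  assumes "1 \<le> k" and "k \<le> n - 1" and "t \<in> {1..n}"
  shows "s < kth_smallest_except n k t x \<longleftrightarrow> card {i \<in> {1..n} - {t}. x i \<le> s} < k"
proof -
  define L where "L = filter (\<lambda>i. i \<noteq> t) [1..<Suc n]"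
  have distinct: "distinct L" and set_L: "set L = {1..n} - {t}"
    by (auto simp: L_def)
  have "length L = n - 1"
    using length_filter_neq_upt[OF assms(3)] by (simp add: L_def)
  moreover have "length (filter (\<lambda>y. y \<le> s) (sort (map x L))) = card {i \<in> {1..n} - {t}. x i \<le> s}"
    using distinct_length_filter[OF distinct, of "\<lambda>i. x i \<le> s"]
    by (simp add: filter_sort filter_map comp_def set_L Int_def conj_commute)
  moreover have "kth_smallest_except n k t x = sort (map x L) ! (k - 1)"
    by (simp only: kth_smallest_except_def L_def)
  ultimately show ?thesis
    using sorted_nth_greater_iff[of "sort (map x L)" "k - 1" s] assms by auto
qed

lemma kth_smallest_except_mem:
  assumes "1 \<le> k" and "k \<le> n - 1" and "t \<in> {1..n}"
  shows "kth_smallest_except n k t x \<in> x ` ({1..n} - {t})"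
proof -
  define L where "L = filter (\<lambda>i. i \<noteq> t) [1..<Suc n]"
  have "length L = n - 1"
    using length_filter_neq_upt[OF assms(3)] by (simp add: L_def)
  have "kth_smallest_except n k t x = sort (map x L) ! (k - 1)"
    by (simp only: kth_smallest_except_def L_def)
  also have "\<dots> \<in> set (sort (map x L))"
    using assms \<open>length L = n - 1\<close> by (intro nth_mem) simp
  also have "set (sort (map x L)) = x ` ({1..n} - {t})"
    by (auto simp: L_def)
  finally show ?thesis .
qed

lemma Y2_greater_iff:
  assumes "1 \<le> k" and "k \<le> n - 1" and "t \<in> {1..n}"
  shows "s < Y2 n k t x \<longleftrightarrow> s < x t \<and> card {i \<in> {1..n} - {t}. x i \<le> s} < k"
  using kth_smallest_except_greater_iff[OF assms] by (simp add: Y2_def)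

lemma Y2_nonneg:
  assumes "1 \<le> k" and "k \<le> n - 1" and "t \<in> {1..n}" and "\<And>i. i \<in> {1..n} \<Longrightarrow> 0 \<le> x i"
  shows "0 \<le> Y2 n k t x"
  using kth_smallest_except_mem[OF assms(1-3), of x] assms(3,4) by (auto simp: Y2_def)

lemma Y2_restrict:
  assumes "t \<in> {1..n}"
  shows "Y2 n k t (restrict x {1..n}) = Y2 n k t x"
proof -
  have "map (restrict x {1..n}) (filter (\<lambda>i. i \<noteq> t) [1..<Suc n]) = map x (filter (\<lambda>i. i \<noteq> t) [1..<Suc n])"
    by (rule map_cong) auto
  moreover have "restrict x {1..n} t = x t"
    using assms by simp
  ultimately show ?thesis
    by (simp only: Y2_def kth_smallest_except_def)
qed

lemma measurable_kth_smallest_except: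
  assumes "1 \<le> k" and "k \<le> n - 1" and "t \<in> {1..n}" and [measurable_cong]: "sets N = sets borel"
  shows "kth_smallest_except n k t \<in> borel_measurable (PiM {1..n} (\<lambda>_. N))"
proof (rule borel_measurable_iff_greater[THEN iffD2], intro allI)
  fix a :: real
  \<comment> \<open>The count is written as a sum of indicators so that the measurability prover applies.\<close>
  have "{x \<in> space (PiM {1..n} (\<lambda>_. N)). a < kth_smallest_except n k t x}
      = {x \<in> space (PiM {1..n} (\<lambda>_. N)). (\<Sum>i\<in>{1..n} - {t}. of_bool (x i \<le> a)) < real k}"
    by (simp add: kth_smallest_except_greater_iff[OF assms(1-3)] Int_def conj_commute)
  also have "\<dots> \<in> sets (PiM {1..n} (\<lambda>_. N))"
    by measurable
  finally show "{x \<in> space (PiM {1..n} (\<lambda>_. N)). a < kth_smallest_except n k t x} \<in> sets (PiM {1..n} (\<lambda>_. N))" .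
qed

lemma measurable_Y2:
  assumes "1 \<le> k" and "k \<le> n - 1" and "t \<in> {1..n}" and [measurable_cong]: "sets N = sets borel"
  shows "Y2 n k t \<in> borel_measurable (PiM {1..n} (\<lambda>_. N))"
  using measurable_kth_smallest_except[OF assms, measurable] assms(3)
  unfolding Y2_def[abs_def] by measurable

lemma (in sigma_finite_measure) nn_integral_eq_nn_integral_tail:
  assumes [measurable]: "f \<in> borel_measurable M"
  shows "(\<integral>\<^sup>+x. ennreal (f x) \<partial>M) = (\<integral>\<^sup>+s\<in>{0..}. emeasure M {x \<in> space M. s < f x} \<partial>lborel)"
proof -
  interpret pair_sigma_finite M lborel ..
  have "ennreal (f x) = (\<integral>\<^sup>+s. indicator {0..<f x} s \<partial>lborel)" for x
    by (cases "0 \<le> f x") (auto simp: ennreal_neg)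
  then have "(\<integral>\<^sup>+x. ennreal (f x) \<partial>M) = (\<integral>\<^sup>+x. (\<integral>\<^sup>+s. indicator {0..<f x} s \<partial>lborel) \<partial>M)"
    by simp
  also have "\<dots> = (\<integral>\<^sup>+s. (\<integral>\<^sup>+x. indicator {0..<f x} s \<partial>M) \<partial>lborel)"
    by (rule Fubini'[symmetric]) (simp only: atLeastLessThan_iff indicator_def; measurable)
  also have "\<dots> = (\<integral>\<^sup>+s. (\<integral>\<^sup>+x. indicator {x \<in> space M. s < f x} x \<partial>M) * indicator {0..} s \<partial>lborel)"
    by (intro nn_integral_cong) (auto simp: indicator_def nn_integral_cmult_indicator[symmetric] intro!: nn_integral_cong)
  finally show ?thesis
    by simp
qed

lemma sum_subsets_card_less:
  fixes f :: "nat \<Rightarrow> 'a::comm_semiring_1"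
  assumes "finite A"
  shows "(\<Sum>J | J \<subseteq> A \<and> card J < k. f (card J)) = (\<Sum>j<k. of_nat (card A choose j) * f j)"
proof -
  have "(\<Sum>J | J \<subseteq> A \<and> card J < k. f (card J))
      = (\<Sum>j<k. \<Sum>J \<in> {J. J \<subseteq> A \<and> card J < k \<and> card J = j}. f (card J))"
    using sum.group[of "{J. J \<subseteq> A \<and> card J < k}" "{..<k}" card "\<lambda>J. f (card J)"] assms
    by (simp add: image_subset_iff)
  also have "\<dots> = (\<Sum>j<k. of_nat (card A choose j) * f j)"
  proof (rule sum.cong)
    fix j assume "j \<in> {..<k}"
    then have "{J. J \<subseteq> A \<and> card J < k \<and> card J = j} = {J. J \<subseteq> A \<and> card J = j}"
      by auto
    then show "(\<Sum>J \<in> {J. J \<subseteq> A \<and> card J < k \<and> card J = j}. f (card J)) = of_nat (card A choose j) * f j"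
      using n_subsets[OF assms, of j] by simp
  qed simp
  finally show ?thesis .
qed

definition pattern_box :: "'i \<Rightarrow> 'i set \<Rightarrow> 'a set \<Rightarrow> 'a set \<Rightarrow> 'a set \<Rightarrow> 'i set \<Rightarrow> ('i \<Rightarrow> 'a) set" where
  "pattern_box t I S A B J = PiE (insert t I) (\<lambda>i. if i = t then B else if i \<in> J then A else S - A)"

lemma pattern_box_count:
  assumes "x \<in> pattern_box t I S A B J" and "J \<subseteq> I" and "t \<notin> I"
  shows "{i \<in> I. x i \<in> A} = J"
proof -
  have "x i \<in> A \<longleftrightarrow> i \<in> J" if "i \<in> I" for i
  proof -
    have "i \<noteq> t"
      using that assms(3) by blast
    then have "x i \<in> (if i \<in> J then A else S - A)"
      using PiE_mem[OF assms(1)[unfolded pattern_box_def], of i] that by simp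
    then show ?thesis
      by (cases "i \<in> J") auto
  qed
  then show ?thesis
    using assms(2) by blast
qed

lemma count_event_eq_UN_pattern_box:
  assumes "t \<notin> I" and "A \<subseteq> S" and "B \<subseteq> S"
  shows "{x \<in> PiE (insert t I) (\<lambda>_. S). x t \<in> B \<and> card {i \<in> I. x i \<in> A} < k}
       = (\<Union>J \<in> {J. J \<subseteq> I \<and> card J < k}. pattern_box t I S A B J)"
proof (intro equalityI subsetI)
  fix x assume x: "x \<in> {x \<in> PiE (insert t I) (\<lambda>_. S). x t \<in> B \<and> card {i \<in> I. x i \<in> A} < k}"
  then have "{i \<in> I. x i \<in> A} \<in> {J. J \<subseteq> I \<and> card J < k}"
    by auto
  moreover have "x \<in> pattern_box t I S A B {i \<in> I. x i \<in> A}"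
    using x assms(1) by (auto simp: pattern_box_def PiE_iff)
  ultimately show "x \<in> (\<Union>J \<in> {J. J \<subseteq> I \<and> card J < k}. pattern_box t I S A B J)"
    by (rule UN_I)
next
  fix x assume "x \<in> (\<Union>J \<in> {J. J \<subseteq> I \<and> card J < k}. pattern_box t I S A B J)"
  then obtain J where "J \<in> {J. J \<subseteq> I \<and> card J < k}" and x: "x \<in> pattern_box t I S A B J"
    by (rule UN_E)
  then have "J \<subseteq> I" and "card J < k"
    by simp_all
  have "pattern_box t I S A B J \<subseteq> PiE (insert t I) (\<lambda>_. S)"
    using assms(2,3) unfolding pattern_box_def by (intro PiE_mono) auto
  then have "x \<in> PiE (insert t I) (\<lambda>_. S)"
    using x by blast
  moreover have "x t \<in> B"
    using PiE_mem[OF x[unfolded pattern_box_def], of t] by simp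
  moreover have "card {i \<in> I. x i \<in> A} < k"
    unfolding pattern_box_count[OF x \<open>J \<subseteq> I\<close> assms(1)] by fact
  ultimately show "x \<in> {x \<in> PiE (insert t I) (\<lambda>_. S). x t \<in> B \<and> card {i \<in> I. x i \<in> A} < k}"
    by blast
qed

lemma disjoint_family_on_pattern_box:
  assumes "t \<notin> I"
  shows "disjoint_family_on (pattern_box t I S A B) (Pow I)"
  unfolding disjoint_family_on_def
proof (intro ballI impI equals0I)
  fix J J' x assume "J \<in> Pow I" "J' \<in> Pow I" "J \<noteq> J'"
    and "x \<in> pattern_box t I S A B J \<inter> pattern_box t I S A B J'"
  then have "J = {i \<in> I. x i \<in> A}" and "{i \<in> I. x i \<in> A} = J'"
    using pattern_box_count[of x t I S A B J] pattern_box_count[of x t I S A B J'] assms by auto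
  with \<open>J \<noteq> J'\<close> show False
    by simp
qed

lemma (in prob_space) prob_pattern_box:
  assumes "finite I" and "t \<notin> I" and "J \<subseteq> I" and "A \<in> events" and "B \<in> events"
  shows "measure (PiM (insert t I) (\<lambda>_. M)) (pattern_box t I (space M) A B J)
       = prob B * (prob A ^ card J * (1 - prob A) ^ (card I - card J))"
proof -
  have "product_prob_space (\<lambda>_. M)"
    by (rule product_prob_spaceI) (rule prob_space_axioms)
  then interpret Pi: finite_product_prob_space "\<lambda>_. M" "insert t I"
    using assms(1) by (simp add: finite_product_prob_space_def finite_product_sigma_finite_def
        finite_product_sigma_finite_axioms_def product_prob_space_def)
  have "measure (PiM (insert t I) (\<lambda>_. M)) (pattern_box t I (space M) A B J)
      = prob B * (\<Prod>i\<in>I. prob (if i \<in> J then A else space M - A))"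
    using assms Pi.prob_times[of "\<lambda>i. if i = t then B else if i \<in> J then A else space M - A"]
    by (auto simp: pattern_box_def intro!: prod.cong)
  also have "(\<Prod>i\<in>I. prob (if i \<in> J then A else space M - A)) = (\<Prod>i\<in>I. if i \<in> J then prob A else 1 - prob A)"
    using assms(4) by (intro prod.cong) (auto simp: prob_compl)
  also have "\<dots> = prob A ^ card J * (1 - prob A) ^ (card I - card J)"
    using assms(1,3) by (simp add: prod.If_cases Int_absorb1 card_Diff_subset finite_subset Diff_eq[symmetric])
  finally show ?thesis .
qed

lemma (in prob_space) prob_PiM_count_less:
  assumes "finite I" and "t \<notin> I" and "A \<in> events" and "B \<in> events"
  shows "measure (PiM (insert t I) (\<lambda>_. M))
           {x \<in> space (PiM (insert t I) (\<lambda>_. M)). x t \<in> B \<and> card {i \<in> I. x i \<in> A} < k}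
       = prob B * (\<Sum>j<k. of_nat (card I choose j) * (prob A ^ j * (1 - prob A) ^ (card I - j)))"
proof -
  let ?\<Omega> = "PiM (insert t I) (\<lambda>_. M)"
  let ?Js = "{J. J \<subseteq> I \<and> card J < k}"
  interpret Pi: prob_space ?\<Omega>
    by (intro prob_space_PiM prob_space_axioms)
  have "{x \<in> space ?\<Omega>. x t \<in> B \<and> card {i \<in> I. x i \<in> A} < k} = (\<Union>J \<in> ?Js. pattern_box t I (space M) A B J)"
    unfolding space_PiM
    using assms(2) sets.sets_into_space[OF assms(3)] sets.sets_into_space[OF assms(4)]
    by (rule count_event_eq_UN_pattern_box)
  then have "measure ?\<Omega> {x \<in> space ?\<Omega>. x t \<in> B \<and> card {i \<in> I. x i \<in> A} < k}
      = measure ?\<Omega> (\<Union>J \<in> ?Js. pattern_box t I (space M) A B J)"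
    by simp
  also have "\<dots> = (\<Sum>J \<in> ?Js. measure ?\<Omega> (pattern_box t I (space M) A B J))"
  proof (rule Pi.finite_measure_finite_Union)
    show "finite ?Js"
      using assms(1) by simp
    show "pattern_box t I (space M) A B ` ?Js \<subseteq> sets ?\<Omega>"
      using assms by (auto simp: pattern_box_def sets_PiM_I_finite)
    show "disjoint_family_on (pattern_box t I (space M) A B) ?Js"
      by (rule disjoint_family_on_mono[OF _ disjoint_family_on_pattern_box[OF assms(2)]]) auto
  qed
  also have "\<dots> = (\<Sum>J \<in> ?Js. prob B * (prob A ^ card J * (1 - prob A) ^ (card I - card J)))"
    using assms by (intro sum.cong) (simp_all add: prob_pattern_box)
  also have "\<dots> = prob B * (\<Sum>j<k. of_nat (card I choose j) * (prob A ^ j * (1 - prob A) ^ (card I - j)))"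
    using sum_subsets_card_less[OF assms(1), of "\<lambda>j. prob A ^ j * (1 - prob A) ^ (card I - j)"]
    by (simp flip: sum_distrib_left)
  finally show ?thesis .
qed

lemma (in prob_space) integral_indep_vars_eq_PiM:
  fixes X :: "'i \<Rightarrow> 'a \<Rightarrow> real" and g :: "('i \<Rightarrow> real) \<Rightarrow> 'b::{banach, second_countable_topology}"
  assumes "I \<noteq> {}" and "indep_vars (\<lambda>_. borel) X I"
    and "\<And>i. i \<in> I \<Longrightarrow> distr M borel (X i) = N"
    and "g \<in> borel_measurable (PiM I (\<lambda>_. borel))"
  shows "(\<integral>\<omega>. g (\<lambda>i\<in>I. X i \<omega>) \<partial>M) = (\<integral>x. g x \<partial>PiM I (\<lambda>_. N))"
proof -
  have X: "random_variable borel (X i)" if "i \<in> I" for i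
    using assms(2) that by (auto simp: indep_vars_def)
  have "distr M (PiM I (\<lambda>_. borel)) (\<lambda>\<omega>. \<lambda>i\<in>I. X i \<omega>) = PiM I (\<lambda>i. distr M borel (X i))"
    using indep_vars_iff_distr_eq_PiM'[of I X "\<lambda>_. borel"] assms(1,2) X by auto
  also have "\<dots> = PiM I (\<lambda>_. N)"
    by (rule PiM_cong) (simp_all add: assms(3))
  finally show ?thesis
    using integral_distr[of "\<lambda>\<omega>. \<lambda>i\<in>I. X i \<omega>" M "PiM I (\<lambda>_. borel)" g] X assms(4)
    by (simp add: measurable_restrict)
qed

lemma measure_uniform_atLeastAtMost_atMost:
  fixes s T :: real
  assumes "0 \<le> s" and "s \<le> T" and "0 < T"
  shows "measure (uniform_measure lborel {0..T}) {..s} = s / T"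
proof -
  have "{0..T} \<inter> {..s} = {0..s}"
    using assms by auto
  then show ?thesis
    using assms by simp
qed

lemma measure_uniform_atLeastAtMost_greaterThan:
  fixes s T :: real
  assumes "0 \<le> s" and "0 < T"
  shows "measure (uniform_measure lborel {0..T}) {s<..} = (if s \<le> T then 1 - s / T else 0)"
proof (cases "s \<le> T")
  case True
  then have "{0..T} \<inter> {s<..} = {s<..T}"
    using assms by auto
  then show ?thesis
    using True assms by (simp add: diff_divide_distrib)
next
  case False
  then have "{0..T} \<inter> {s<..} = {}"
    by auto
  then show ?thesis
    using False assms by simp
qed

definition Y2_survival :: "nat \<Rightarrow> nat \<Rightarrow> real \<Rightarrow> real" where
  "Y2_survival n k u = (1 - u) * (\<Sum>j<k. real ((n - 1) choose j) * (u ^ j * (1 - u) ^ (n - 1 - j)))"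

lemma Y2_survival_nonneg:
  assumes "0 \<le> u" and "u \<le> 1"
  shows "0 \<le> Y2_survival n k u"
  using assms unfolding Y2_survival_def by (intro mult_nonneg_nonneg sum_nonneg) auto

lemma measure_PiM_uniform_Y2_greater:
  fixes s T :: real
  assumes "0 < T" and "1 \<le> k" and "k \<le> n - 1" and "t \<in> {1..n}" and "0 \<le> s"
  shows "measure (PiM {1..n} (\<lambda>_. uniform_measure lborel {0..T}))
           {x \<in> space (PiM {1..n} (\<lambda>_. uniform_measure lborel {0..T})). s < Y2 n k t x}
       = (if s \<le> T then Y2_survival n k (s / T) else 0)"
proof -
  let ?U = "uniform_measure lborel {0..T}"
  let ?P = "PiM {1..n} (\<lambda>_. ?U)"
  interpret U: prob_space ?U
    using assms(1) by (intro prob_space_uniform_measure) auto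
  have "measure ?P {x \<in> space ?P. s < Y2 n k t x}
      = measure ?P {x \<in> space ?P. x t \<in> {s<..} \<and> card {i \<in> {1..n} - {t}. x i \<in> {..s}} < k}"
    by (simp add: Y2_greater_iff[OF assms(2-4)])
  also have "\<dots> = U.prob {s<..} * (\<Sum>j<k. real ((n - 1) choose j) * (U.prob {..s} ^ j * (1 - U.prob {..s}) ^ (n - 1 - j)))"
    using U.prob_PiM_count_less[of "{1..n} - {t}" t "{..s}" "{s<..}" k] assms(4)
    by (simp add: insert_absorb)
  also have "\<dots> = (if s \<le> T then Y2_survival n k (s / T) else 0)"
    using assms(1,5)
    by (simp add: measure_uniform_atLeastAtMost_atMost measure_uniform_atLeastAtMost_greaterThan
        Y2_survival_def del: measure_uniform_measure)
  finally show ?thesis .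
qed

lemma has_integral_Beta_nat:
  "((\<lambda>u::real. u ^ a * (1 - u) ^ b) has_integral (fact a * fact b / fact (a + b + 1))) {0..1}"
proof -
  have "((\<lambda>u::real. u powr (real (a + 1) - 1) * (1 - u) powr (real (b + 1) - 1)) has_integral
        Beta (real (a + 1)) (real (b + 1))) {0..1}"
    by (rule has_integral_Beta_real) auto
  moreover have "Beta (real (a + 1)) (real (b + 1)) = fact a * fact b / fact (a + b + 1)"
  proof -
    have Gamma_Suc: "Gamma (real (Suc m)) = fact m" for m
      using Gamma_fact[of m] by (simp add: add.commute)
    show ?thesis
      using Gamma_Suc[of a] Gamma_Suc[of b] Gamma_Suc[of "a + b + 1"]
      by (simp add: Beta_def add.commute add.left_commute)
  qed
  ultimately have powr_integral: "((\<lambda>u::real. u powr real a * (1 - u) powr real b) has_integral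
        (fact a * fact b / fact (a + b + 1))) {0..1}"
    by simp
  have "u powr real a * (1 - u) powr real b = u ^ a * (1 - u) ^ b" if "u \<in> {0..1} - {0, 1}" for u :: real
    using that by (simp add: powr_realpow)
  then show ?thesis
    by (intro has_integral_spike_finite[OF _ _ powr_integral, of "{0, 1}"]) auto
qed

lemma choose_mult_Beta_nat:
  assumes "j < n"
  shows "real ((n - 1) choose j) * (fact j * fact (n - j) / fact (n + 1)) = real (n - j) / (real n * real (n + 1))"
proof -
  obtain m where n: "n = Suc m"
    using assms by (cases n) auto
  then have "j \<le> m"
    using assms by simp
  then have "real (m choose j) = fact m / (fact j * fact (m - j))"
    and "fact (n - j) = real (n - j) * fact (m - j)"
    by (simp_all add: binomial_fact n Suc_diff_le)
  moreover have "(fact (n + 1) :: real) = real (n + 1) * real n * fact m"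
    by (simp add: n)
  ultimately show ?thesis
    by (simp add: n divide_simps)
qed

lemma sum_lessThan_of_nat_diff:
  assumes "k \<le> n"
  shows "(\<Sum>j<k. real (n - j)) = (real n * real (n + 1) - real (n - k) * real (n - k + 1)) / 2"
  using assms by (induction k) (simp_all add: of_nat_diff field_simps)

lemma has_integral_Y2_survival:
  assumes "k \<le> n" and "0 < n"
  shows "(Y2_survival n k has_integral 1 / 2 - real (n - k) * real (n - k + 1) / (2 * real n * real (n + 1))) {0..1}"
proof -
  have survival: "Y2_survival n k = (\<lambda>u. \<Sum>j<k. real ((n - 1) choose j) * (u ^ j * (1 - u) ^ (n - j)))"
  proof
    fix u :: real
    have "(1 - u) * (real ((n - 1) choose j) * (u ^ j * (1 - u) ^ (n - 1 - j)))
        = real ((n - 1) choose j) * (u ^ j * (1 - u) ^ (n - j))" if "j < k" for j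
    proof -
      have "n - j = Suc (n - 1 - j)"
        using that assms(1) by simp
      then show ?thesis
        by (simp only: power_Suc mult.left_commute)
    qed
    then show "Y2_survival n k u = (\<Sum>j<k. real ((n - 1) choose j) * (u ^ j * (1 - u) ^ (n - j)))"
      unfolding Y2_survival_def sum_distrib_left by (intro sum.cong) simp_all
  qed
  have "(Y2_survival n k has_integral (\<Sum>j<k. real (n - j) / (real n * real (n + 1)))) {0..1}"
    unfolding survival
  proof (rule has_integral_sum)
    fix j assume "j \<in> {..<k}"
    then have "j < n"
      using assms(1) by simp
    then have "((\<lambda>u::real. u ^ j * (1 - u) ^ (n - j)) has_integral (fact j * fact (n - j) / fact (n + 1))) {0..1}"
      using has_integral_Beta_nat[of j "n - j"] by simp
    from has_integral_mult_right[OF this, of "real ((n - 1) choose j)"]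
    show "((\<lambda>u. real ((n - 1) choose j) * (u ^ j * (1 - u) ^ (n - j))) has_integral
        real (n - j) / (real n * real (n + 1))) {0..1}"
      using choose_mult_Beta_nat[OF \<open>j < n\<close>] by simp
  qed simp
  also have "(\<Sum>j<k. real (n - j) / (real n * real (n + 1))) = 1 / 2 - real (n - k) * real (n - k + 1) / (2 * real n * real (n + 1))"
  proof -
    have "(a - b) / 2 / a = 1 / 2 - b / (2 * a)" if "a \<noteq> 0" for a b :: real
      using that by (simp add: field_simps)
    then show ?thesis
      unfolding sum_divide_distrib[symmetric] sum_lessThan_of_nat_diff[OF assms(1)] mult.assoc
      using assms(2) by simp
  qed
  finally show ?thesis .
qed

lemma has_integral_rescale_unit_interval:
  fixes g :: "real \<Rightarrow> real"
  assumes "(g has_integral I) {0..1}" and "0 < T"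
  shows "((\<lambda>s. g (s / T)) has_integral T * I) {0..T}"
proof -
  have "(\<lambda>x. x / (1 / T)) ` {0..1} = {0..T}"
    using image_mult_atLeastAtMost[of T 0 1] assms(2) by (simp add: mult.commute)
  then show ?thesis
    using has_integral_stretch_real[OF assms(1), of "1 / T"] assms(2) by simp
qed

lemma nn_integral_PiM_uniform_Y2:
  fixes T :: real
  assumes "0 < T" and "1 \<le> k" and "k \<le> n - 1" and "t \<in> {1..n}"
  shows "(\<integral>\<^sup>+x. ennreal (Y2 n k t x) \<partial>PiM {1..n} (\<lambda>_. uniform_measure lborel {0..T}))
       = (\<integral>\<^sup>+s. ennreal (Y2_survival n k (s / T)) * indicator {0..T} s \<partial>lborel)"
proof -
  let ?P = "PiM {1..n} (\<lambda>_. uniform_measure lborel {0..T})"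
  interpret P: prob_space ?P
    using assms(1) by (intro prob_space_PiM prob_space_uniform_measure) auto
  have "(\<integral>\<^sup>+x. ennreal (Y2 n k t x) \<partial>?P) = (\<integral>\<^sup>+s\<in>{0..}. emeasure ?P {x \<in> space ?P. s < Y2 n k t x} \<partial>lborel)"
    using assms(2-4) by (intro P.nn_integral_eq_nn_integral_tail measurable_Y2) simp_all
  also have "\<dots> = (\<integral>\<^sup>+s. ennreal (Y2_survival n k (s / T)) * indicator {0..T} s \<partial>lborel)"
  proof (rule nn_integral_cong)
    fix s :: real
    show "emeasure ?P {x \<in> space ?P. s < Y2 n k t x} * indicator {0..} s
        = ennreal (Y2_survival n k (s / T)) * indicator {0..T} s"
    proof (cases "0 \<le> s")
      case True
      then show ?thesis
        unfolding P.emeasure_eq_measure measure_PiM_uniform_Y2_greater[OF assms True]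
        by (simp add: indicator_def)
    qed simp
  qed
  finally show ?thesis .
qed

lemma integral_PiM_uniform_Y2:
  fixes T :: real
  assumes "0 < T" and "1 \<le> k" and "k \<le> n - 1" and "t \<in> {1..n}"
  shows "(\<integral>x. Y2 n k t x \<partial>PiM {1..n} (\<lambda>_. uniform_measure lborel {0..T}))
       = T / 2 - (real (n - k) * real (n - k + 1) * T) / (2 * real n * real (n + 1))"
proof -
  let ?U = "uniform_measure lborel {0..T}"
  let ?P = "PiM {1..n} (\<lambda>_. ?U)"
  define c where "c = 1 / 2 - real (n - k) * real (n - k + 1) / (2 * real n * real (n + 1))"
  have U: "prob_space ?U"
    using assms(1) by (intro prob_space_uniform_measure) auto
  have survival_integral: "((\<lambda>s. Y2_survival n k (s / T)) has_integral T * c) {0..T}"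
    using has_integral_Y2_survival[of k n] assms
    by (intro has_integral_rescale_unit_interval) (simp_all add: c_def)
  have survival_nonneg: "0 \<le> Y2_survival n k (s / T)" if "s \<in> {0..T}" for s
    using assms(1) that by (auto intro: Y2_survival_nonneg)
  have "AE x in ?P. \<forall>i\<in>{1..n}. x i \<in> {0..T}"
    using assms(1) U by (intro AE_finite_allI AE_PiM_component) (auto simp: AE_uniform_measure)
  then have "AE x in ?P. 0 \<le> Y2 n k t x"
    by eventually_elim (auto intro: Y2_nonneg[OF assms(2-4)])
  then have "(\<integral>x. Y2 n k t x \<partial>?P) = enn2real (\<integral>\<^sup>+x. ennreal (Y2 n k t x) \<partial>?P)"
    using assms(2-4) by (intro integral_eq_nn_integral measurable_Y2) simp_all
  also have "(\<integral>\<^sup>+x. ennreal (Y2 n k t x) \<partial>?P) = ennreal (T * c)"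
    unfolding nn_integral_PiM_uniform_Y2[OF assms]
    by (rule nn_integral_has_integral_lebesgue'[OF survival_nonneg survival_integral])
  also have "enn2real (ennreal (T * c)) = T * c"
    using has_integral_nonneg[OF survival_integral survival_nonneg] by simp
  also have "\<dots> = T / 2 - (real (n - k) * real (n - k + 1) * T) / (2 * real n * real (n + 1))"
    by (simp add: c_def field_simps)
  finally show ?thesis .
qed

theorem corollary4:
  fixes M :: "'a measure" and X :: "nat \<Rightarrow> 'a \<Rightarrow> real"
    and n k t :: nat and T :: real
  assumes "prob_space M"
    and "n \<ge> 2" and "1 \<le> k" and "k \<le> n - 1" and "T > 0" and "t \<in> {1..n}"
    and "prob_space.indep_vars M (\<lambda>_. borel) X {1..n}"
    and "\<And>i. i \<in> {1..n} \<Longrightarrow> distr M borel (X i) = uniform_measure lborel {0..T}"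
  shows "(\<integral>\<omega>. Y2 n k t (\<lambda>i. X i \<omega>) \<partial>M)
           = T / 2 - (real (n - k) * real (n - k + 1) * T) / (2 * real n * real (n + 1))"
proof -
  interpret prob_space M
    by (rule assms(1))
  have "(\<integral>\<omega>. Y2 n k t (\<lambda>i. X i \<omega>) \<partial>M) = (\<integral>\<omega>. Y2 n k t (\<lambda>i\<in>{1..n}. X i \<omega>) \<partial>M)"
    by (simp only: Y2_restrict[OF assms(6)])
  also have "\<dots> = (\<integral>x. Y2 n k t x \<partial>PiM {1..n} (\<lambda>_. uniform_measure lborel {0..T}))"
    using assms(2,7,8) measurable_Y2[OF assms(3,4,6) refl] by (intro integral_indep_vars_eq_PiM) auto
  also have "\<dots> = T / 2 - (real (n - k) * real (n - k + 1) * T) / (2 * real n * real (n + 1))"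
    using assms(5,3,4,6) by (rule integral_PiM_uniform_Y2)
  finally show ?thesis .
qed

end
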